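(* Let $p_1,\ldots,p_n,q_1,\ldots,q_n\in(0,1]$ and $c>0$ satisfy \[ \left(\frac{p_1+q_1}{2}\cdots\frac{p_n+q_n}{2}\right)^2\le c\,p_1\cdots p_n\,q_1\cdots q_n . \] Then $\sum_{i=1}^n(p_i-q_i)^2\le O(\log c)$, where the constant in $O(\cdot)$ is absolute.
   Context: Logarithms are binary. *)

theory Defs
  imports Complex_Main
begin

end

theory Submission
  imports Defs
begin

text \<open>Each factor satisfies \<open>((p + q)/2)\<^sup>2 / (p q) = 1 + (p - q)\<^sup>2 / (4 p q) \<ge> 1 + (p - q)\<^sup>2 / 4\<close>,
  and \<open>ln (1 + x) \<ge> 3x/4\<close> on \<open>[0, 1/4]\<close>. Taking logarithms of the hypothesis therefore gives
  \<open>3/16 \<cdot> \<Sum>(p\<^sub>i - q\<^sub>i)\<^sup>2 \<le> ln c \<le> log\<^sub>2 c\<close>, so \<open>C = 16/3\<close> works.\<close>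

lemma ln_one_plus_ge_three_quarters:
  fixes x :: real
  assumes "0 \<le> x" "x \<le> 1/4"
  shows "3/4 * x \<le> ln (1 + x)"
proof -
  have "3/4 * x \<le> x - x^2"
    using mult_left_mono[of x "1/4" x] assms by (simp add: power2_eq_square)
  also have "\<dots> \<le> ln (1 + x)"
    using assms by (intro ln_one_plus_pos_lower_bound) auto
  finally show ?thesis .
qed

lemma mean_square_div_mult_eq:
  fixes p q :: real
  assumes "p * q \<noteq> 0"
  shows "((p + q) / 2)^2 / (p * q) = 1 + (p - q)^2 / (4 * (p * q))"
  using assms by (simp add: field_simps power2_eq_square)

lemma ln_mean_square_div_mult_ge:
  fixes p q :: real
  assumes "0 < p" "p \<le> 1" "0 < q" "q \<le> 1"
  shows "3/16 * (p - q)^2 \<le> ln (((p + q) / 2)^2 / (p * q))"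
proof -
  define x where "x = (p - q)^2 / 4"
  have pq: "0 < p * q" "p * q \<le> 1"
    using assms by (auto simp: mult_le_one)
  have "\<bar>p - q\<bar> \<le> 1"
    using assms by arith
  then have x_range: "0 \<le> x" "x \<le> 1/4"
    by (auto simp: x_def abs_square_le_1)
  have "1 + x \<le> 1 + (p - q)^2 / (4 * (p * q))"
    unfolding x_def using pq by (intro add_left_mono divide_left_mono) auto
  also have "\<dots> = ((p + q) / 2)^2 / (p * q)"
    using pq by (intro mean_square_div_mult_eq[symmetric]) linarith
  finally have "ln (1 + x) \<le> ln (((p + q) / 2)^2 / (p * q))"
    using x_range by simp
  with ln_one_plus_ge_three_quarters[OF x_range] show ?thesis
    by (simp add: x_def)
qed

lemma prod_mean_square_div_mult:
  fixes p q :: "'a \<Rightarrow> real"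
  shows "(\<Prod>i\<in>A. ((p i + q i) / 2)^2 / (p i * q i))
           = (\<Prod>i\<in>A. (p i + q i) / 2)^2 / ((\<Prod>i\<in>A. p i) * (\<Prod>i\<in>A. q i))"
  by (subst prod_dividef, subst prod_power_distrib, subst prod.distrib) (rule refl)

lemma sum_square_diff_le_ln:
  fixes p q :: "'a \<Rightarrow> real"
  assumes "finite A"
    and p: "\<And>i. i \<in> A \<Longrightarrow> 0 < p i \<and> p i \<le> 1"
    and q: "\<And>i. i \<in> A \<Longrightarrow> 0 < q i \<and> q i \<le> 1"
    and bound: "(\<Prod>i\<in>A. (p i + q i) / 2)^2 \<le> c * (\<Prod>i\<in>A. p i) * (\<Prod>i\<in>A. q i)"
  shows "3/16 * (\<Sum>i\<in>A. (p i - q i)^2) \<le> ln c"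
proof -
  define r where "r i = ((p i + q i) / 2)^2 / (p i * q i)" for i
  have r_pos: "0 < r i" if "i \<in> A" for i
    using p[OF that] q[OF that] by (simp add: r_def)
  have "(\<Prod>i\<in>A. r i) \<le> c"
    using bound p q unfolding r_def prod_mean_square_div_mult
    by (simp add: divide_le_eq mult.assoc prod_pos)
  moreover have "0 < (\<Prod>i\<in>A. r i)"
    using r_pos by (rule prod_pos)
  ultimately have "ln (\<Prod>i\<in>A. r i) \<le> ln c"
    by simp
  moreover have "3/16 * (\<Sum>i\<in>A. (p i - q i)^2) \<le> (\<Sum>i\<in>A. ln (r i))"
    unfolding sum_distrib_left r_def
    using p q by (intro sum_mono ln_mean_square_div_mult_ge) auto
  moreover have "(\<Sum>i\<in>A. ln (r i)) = ln (\<Prod>i\<in>A. r i)"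
    using ln_prod[OF \<open>finite A\<close>, of r] r_pos by force
  ultimately show ?thesis
    by linarith
qed

lemma ln_le_log2:
  fixes c :: real
  assumes "0 \<le> ln c"
  shows "ln c \<le> log 2 c"
  using mult_left_mono[OF less_imp_le[OF ln_2_less_1] assms]
  by (simp add: log_def le_divide_eq)

theorem lemma3:
  "\<exists>C::real. C > 0 \<and>
     (\<forall>(n::nat) (p::nat \<Rightarrow> real) (q::nat \<Rightarrow> real) (c::real).
        (\<forall>i<n. 0 < p i \<and> p i \<le> 1) \<longrightarrow>
        (\<forall>i<n. 0 < q i \<and> q i \<le> 1) \<longrightarrow>
        c > 0 \<longrightarrow>
        (\<Prod>i<n. (p i + q i) / 2) ^ 2 \<le> c * (\<Prod>i<n. p i) * (\<Prod>i<n. q i) \<longrightarrow>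
        (\<Sum>i<n. (p i - q i) ^ 2) \<le> C * log 2 c)"
proof (intro exI[of _ "16/3"] conjI allI impI)
  fix n :: nat and p q :: "nat \<Rightarrow> real" and c :: real
  assume "\<forall>i<n. 0 < p i \<and> p i \<le> 1" "\<forall>i<n. 0 < q i \<and> q i \<le> 1"
    and "(\<Prod>i<n. (p i + q i) / 2) ^ 2 \<le> c * (\<Prod>i<n. p i) * (\<Prod>i<n. q i)"
  then have sum_le: "3/16 * (\<Sum>i<n. (p i - q i)^2) \<le> ln c"
    by (intro sum_square_diff_le_ln) auto
  moreover have "0 \<le> (\<Sum>i<n. (p i - q i)^2)"
    by (intro sum_nonneg) auto
  ultimately have "ln c \<le> log 2 c"
    by (intro ln_le_log2) linarith
  with sum_le show "(\<Sum>i<n. (p i - q i) ^ 2) \<le> 16/3 * log 2 c"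
    by linarith
qed simp

end
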